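(* Let $\delta>0$, $L=3/(4\delta)$ and $\tilde L=(1+\epsilon)L$ with $\epsilon=10^{-6}$. Let data $(\mathbf{x}_i,y_i)$, $i=1,\dots,n$, with $\mathbf{x}_i=(x_{i1},\dots,x_{ip})\in\mathbb{R}^p$, $y_i\in\{-1,1\}$, be standardized so that $\frac1n\sum_i x_{ij}=0$ and $\frac1n\sum_i x_{ij}^2=1$ for every $j$. Fix $\tilde\beta_0,\tilde{\boldsymbol\beta}$, set $r_i=y_i(\tilde\beta_0+\mathbf{x}_i^\top\tilde{\boldsymbol\beta})$, fix $j$, and let $P$ be any real-valued function of $\beta_j$ (the penalty). Define $$F(\beta_j)=\frac1n\sum_{i=1}^n B_\delta\big(r_i+y_ix_{ij}(\beta_j-\tilde\beta_j)\big)+P(\beta_j),$$ $$Q(\beta_j)=\frac{1}{n}\sum_{i=1}^n B_\delta(r_i)+\frac{1}{n}\sum_{i=1}^n B_\delta'(r_i)y_ix_{ij}(\beta_j-\tilde\beta_j)+\frac{\tilde L}{2}(\beta_j-\tilde\beta_j)^2+P(\beta_j).$$ Then $F(\beta_j)=Q(\beta_j)$ if $\beta_j=\tilde\beta_j$, and $F(\beta_j)<Q(\beta_j)$ if $\beta_j\neq\tilde\beta_j$.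
   Context: $B_\delta$ (the BernSVM loss) is defined by $B_\delta(t)=(1-t)_+$ if $|t-1|>\delta$ and $B_\delta(t)=g_\delta(t)=\frac{1}{8\delta^{3}}\{\frac{(1-t+\delta)^{4}}{2}-(1-t-\delta)(1-t+\delta)^{3}\}$ if $|t-1|\le\delta$; it is twice continuously differentiable. *)

theory Defs
  imports "HOL-Analysis.Analysis"
begin

definition bern_g :: "real \<Rightarrow> real \<Rightarrow> real" where
  "bern_g \<delta> t = (1 / (8 * \<delta> ^ 3)) *
     ((1 - t + \<delta>) ^ 4 / 2 - (1 - t - \<delta>) * (1 - t + \<delta>) ^ 3)"

definition bern :: "real \<Rightarrow> real \<Rightarrow> real" where
  "bern \<delta> t = (if \<bar>t - 1\<bar> > \<delta> then max (1 - t) 0 else bern_g \<delta> t)"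

end

theory Submission
  imports Defs
begin

text \<open>
  The derivative of \<open>B\<^sub>\<delta>\<close> is Lipschitz with constant \<open>L = 3/(4\<delta>)\<close>: on the middle piece
  \<open>B\<^sub>\<delta>'' = 3(\<delta>\<^sup>2 - (1 - t)\<^sup>2)/(4\<delta>\<^sup>3) \<le> L\<close>, and outside it \<open>B\<^sub>\<delta>'\<close> is constant.
  The descent lemma then bounds \<open>B\<^sub>\<delta>(r + h)\<close> by its tangent line plus \<open>L h\<^sup>2/2\<close>.
  Averaging over the data with \<open>h = y i * x i j * (b - \<beta>t j)\<close>, where \<open>(y i)\<^sup>2 = 1\<close> and the
  standardization gives \<open>(1/n) \<Sum>i<n. (x i j)\<^sup>2 = 1\<close>, yields
  \<open>F b \<le> Q b - (Lt - L)/2 * (b - \<beta>t j)\<^sup>2\<close>, and \<open>Lt > L\<close> makes this strict for \<open>b \<noteq> \<beta>t j\<close>.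
\<close>

lemma descent_lemma:
  fixes f f' :: "real \<Rightarrow> real"
  assumes derivative: "\<And>t. (f has_real_derivative f' t) (at t)"
    and lipschitz: "\<And>s t. s \<le> t \<Longrightarrow> f' t - f' s \<le> L * (t - s)"
  shows "f (r + h) \<le> f r + f' r * h + L / 2 * h\<^sup>2"
proof -
  define \<phi> where "\<phi> t = f r + f' r * (t - r) + L / 2 * (t - r)\<^sup>2 - f t" for t
  have \<phi>_deriv: "(\<phi> has_real_derivative f' r + L * (t - r) - f' t) (at t)" for t
    unfolding \<phi>_def [abs_def]
    by (auto intro!: derivative_eq_intros derivative simp: power2_eq_square algebra_simps)
  have "\<phi> r \<le> \<phi> (r + h)"
  proof (cases "h \<ge> 0")
    case True
    show ?thesis
      by (rule DERIV_nonneg_imp_nondecreasing[of r "r + h"])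
         (use True \<phi>_deriv lipschitz in \<open>force simp: algebra_simps\<close>)+
  next
    case False
    show ?thesis
      by (rule deriv_nonpos_imp_antimono[of "r + h" r, OF \<phi>_deriv])
         (use False lipschitz in \<open>force simp: algebra_simps\<close>)+
  qed
  then show ?thesis
    by (simp add: \<phi>_def)
qed

lemma has_real_derivative_glue:
  fixes f g h :: "real \<Rightarrow> real"
  assumes g: "(g has_real_derivative D) (at a)" and h: "(h has_real_derivative D) (at a)"
    and "e > 0"
    and "\<And>x. x \<le> a \<Longrightarrow> dist x a < e \<Longrightarrow> f x = g x"
    and "\<And>x. x \<ge> a \<Longrightarrow> dist x a < e \<Longrightarrow> f x = h x"
  shows "(f has_real_derivative D) (at a)"
proof -
  have "(f has_real_derivative D) (at a within {..a})"
    by (rule has_field_derivative_transform_within[OF has_field_derivative_at_within[OF g] \<open>e > 0\<close>])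
       (use assms in auto)
  moreover have "(f has_real_derivative D) (at a within {a..})"
    by (rule has_field_derivative_transform_within[OF has_field_derivative_at_within[OF h] \<open>e > 0\<close>])
       (use assms in auto)
  ultimately have "(f has_real_derivative D) (at a within ({..a} \<union> {a..}))"
    unfolding has_field_derivative_iff Lim_within_Un by simp
  moreover have "{..a} \<union> {a..} = (UNIV :: real set)"
    by auto
  ultimately show ?thesis
    by simp
qed

definition bern_g' :: "real \<Rightarrow> real \<Rightarrow> real" where
  "bern_g' \<delta> t = - ((1 - t + \<delta>)\<^sup>2 * (2 * \<delta> - 1 + t)) / (4 * \<delta> ^ 3)"

definition bern_g'' :: "real \<Rightarrow> real \<Rightarrow> real" where
  "bern_g'' \<delta> t = 3 * (\<delta>\<^sup>2 - (1 - t)\<^sup>2) / (4 * \<delta> ^ 3)"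

text \<open>Since \<open>bern_g' \<delta>\<close> takes the slopes \<open>-1\<close> and \<open>0\<close> of the outer pieces at \<open>1 \<mp> \<delta>\<close>,
  clamping its argument to \<open>[1 - \<delta>, 1 + \<delta>]\<close> gives the derivative of \<open>B\<^sub>\<delta>\<close>.\<close>
definition bern' :: "real \<Rightarrow> real \<Rightarrow> real" where
  "bern' \<delta> t = bern_g' \<delta> (max (1 - \<delta>) (min (1 + \<delta>) t))"

lemma bern_g_has_derivative: "\<delta> \<noteq> 0 \<Longrightarrow> (bern_g \<delta> has_real_derivative bern_g' \<delta> t) (at t)"
  unfolding bern_g_def [abs_def] bern_g'_def
  by (auto intro!: derivative_eq_intros simp: field_simps eval_nat_numeral)

lemma bern_g'_has_derivative: "\<delta> \<noteq> 0 \<Longrightarrow> (bern_g' \<delta> has_real_derivative bern_g'' \<delta> t) (at t)"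
  unfolding bern_g'_def [abs_def] bern_g''_def
  by (auto intro!: derivative_eq_intros simp: field_simps eval_nat_numeral)

lemma bern_g''_le:
  assumes "\<delta> > 0"
  shows "bern_g'' \<delta> t \<le> 3 / (4 * \<delta>)"
proof -
  have "bern_g'' \<delta> t \<le> 3 * \<delta>\<^sup>2 / (4 * \<delta> ^ 3)"
    unfolding bern_g''_def using assms by (intro divide_right_mono) auto
  also have "\<dots> = 3 / (4 * \<delta>)"
    using assms by (simp add: field_simps eval_nat_numeral)
  finally show ?thesis .
qed

lemma bern_g'_lipschitz:
  assumes "\<delta> > 0" and "s \<le> t"
  shows "bern_g' \<delta> t - bern_g' \<delta> s \<le> 3 / (4 * \<delta>) * (t - s)"
proof -
  have "(\<lambda>x. 3 / (4 * \<delta>) * x - bern_g' \<delta> x) s \<le> (\<lambda>x. 3 / (4 * \<delta>) * x - bern_g' \<delta> x) t"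
  proof (rule DERIV_nonneg_imp_nondecreasing[OF \<open>s \<le> t\<close>])
    fix x
    have "((\<lambda>x. 3 / (4 * \<delta>) * x - bern_g' \<delta> x) has_real_derivative 3 / (4 * \<delta>) - bern_g'' \<delta> x) (at x)"
      using assms by (auto intro!: derivative_eq_intros bern_g'_has_derivative)
    then show "\<exists>y. ((\<lambda>x. 3 / (4 * \<delta>) * x - bern_g' \<delta> x) has_real_derivative y) (at x) \<and> 0 \<le> y"
      using bern_g''_le[OF \<open>\<delta> > 0\<close>] by force
  qed
  then show ?thesis
    by (simp add: right_diff_distrib)
qed

lemma bern'_lipschitz:
  assumes "\<delta> > 0" and "s \<le> t"
  shows "bern' \<delta> t - bern' \<delta> s \<le> 3 / (4 * \<delta>) * (t - s)"
proof -
  define c where "c x = max (1 - \<delta>) (min (1 + \<delta>) x)" for x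
  have "c s \<le> c t" and "c t - c s \<le> t - s"
    using \<open>s \<le> t\<close> by (auto simp: c_def)
  then have "bern_g' \<delta> (c t) - bern_g' \<delta> (c s) \<le> 3 / (4 * \<delta>) * (c t - c s)"
    using bern_g'_lipschitz[OF \<open>\<delta> > 0\<close>] by blast
  also have "\<dots> \<le> 3 / (4 * \<delta>) * (t - s)"
    using \<open>c t - c s \<le> t - s\<close> \<open>\<delta> > 0\<close> by (intro mult_left_mono) auto
  finally show ?thesis
    by (simp add: bern'_def c_def)
qed

lemma
  assumes "\<delta> > 0"
  shows bern_g_left_end: "bern_g \<delta> (1 - \<delta>) = \<delta>"
    and bern_g_right_end: "bern_g \<delta> (1 + \<delta>) = 0"
    and bern_g'_left_end: "bern_g' \<delta> (1 - \<delta>) = -1"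
    and bern_g'_right_end: "bern_g' \<delta> (1 + \<delta>) = 0"
  using assms by (auto simp: bern_g_def bern_g'_def field_simps eval_nat_numeral)

lemma bern_left: "\<delta> > 0 \<Longrightarrow> t \<le> 1 - \<delta> \<Longrightarrow> bern \<delta> t = 1 - t"
  by (cases "t = 1 - \<delta>") (auto simp: bern_def bern_g_left_end)

lemma bern_right: "\<delta> > 0 \<Longrightarrow> t \<ge> 1 + \<delta> \<Longrightarrow> bern \<delta> t = 0"
  by (cases "t = 1 + \<delta>") (auto simp: bern_def bern_g_right_end)

lemma bern_middle: "1 - \<delta> \<le> t \<Longrightarrow> t \<le> 1 + \<delta> \<Longrightarrow> bern \<delta> t = bern_g \<delta> t"
  by (auto simp: bern_def)

lemma bern_has_derivative:
  assumes "\<delta> > 0"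
  shows "(bern \<delta> has_real_derivative bern' \<delta> t) (at t)"
proof -
  have bern_g: "(bern_g \<delta> has_real_derivative bern_g' \<delta> t) (at t)" for t
    using assms by (simp add: bern_g_has_derivative)
  have linear: "((\<lambda>x. 1 - x) has_real_derivative -1) (at t)"
    and zero: "((\<lambda>x. 0) has_real_derivative 0) (at t)" for t :: real
    by (auto intro!: derivative_eq_intros)
  consider "t < 1 - \<delta>" | "t = 1 - \<delta>" | "1 - \<delta> < t" "t < 1 + \<delta>" | "t = 1 + \<delta>" | "t > 1 + \<delta>"
    by linarith
  then show ?thesis
  proof cases
    case 1
    then have "bern' \<delta> t = -1"
      using assms by (simp add: bern'_def bern_g'_left_end)
    with 1 show ?thesis
      using has_field_derivative_transform_within_open[OF linear open_lessThan, of t "1 - \<delta>"]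
      by (simp add: assms bern_left)
  next
    case 2
    then have "bern' \<delta> t = -1"
      using assms by (simp add: bern'_def bern_g'_left_end)
    with 2 show ?thesis
      using has_real_derivative_glue[OF linear bern_g[of t, unfolded 2 bern_g'_left_end[OF assms]] assms]
      by (simp add: assms bern_left bern_middle dist_real_def)
  next
    case 3
    then have "bern' \<delta> t = bern_g' \<delta> t"
      by (simp add: bern'_def)
    with 3 show ?thesis
      using has_field_derivative_transform_within_open[OF bern_g open_greaterThanLessThan, of t "1 - \<delta>" "1 + \<delta>"]
      by (simp add: bern_middle)
  next
    case 4
    then have "bern' \<delta> t = 0"
      using assms by (simp add: bern'_def bern_g'_right_end)
    with 4 show ?thesis
      using has_real_derivative_glue[OF bern_g[of t, unfolded 4 bern_g'_right_end[OF assms]] zero assms]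
      by (simp add: assms bern_right bern_middle dist_real_def)
  next
    case 5
    then have "bern' \<delta> t = 0"
      using assms by (simp add: bern'_def bern_g'_right_end)
    with 5 show ?thesis
      using has_field_derivative_transform_within_open[OF zero open_greaterThan, of t "1 + \<delta>"]
      by (simp add: assms bern_right)
  qed
qed

lemma deriv_bern: "\<delta> > 0 \<Longrightarrow> deriv (bern \<delta>) = bern' \<delta>"
  by (intro ext DERIV_imp_deriv bern_has_derivative)

lemma bern_descent:
  assumes "\<delta> > 0"
  shows "bern \<delta> (r + h) \<le> bern \<delta> r + deriv (bern \<delta>) r * h + 3 / (8 * \<delta>) * h\<^sup>2"
  using descent_lemma[OF bern_has_derivative bern'_lipschitz, OF assms assms]
  by (simp add: deriv_bern[OF assms])

lemma mean_bern_descent: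
  assumes "\<delta> > 0"
  shows "(1 / real n) * (\<Sum>i<n. bern \<delta> (r i + a i * h))
    \<le> (1 / real n) * (\<Sum>i<n. bern \<delta> (r i)) + (1 / real n) * (\<Sum>i<n. deriv (bern \<delta>) (r i) * a i * h)
      + 3 / (8 * \<delta>) * ((1 / real n) * (\<Sum>i<n. (a i)\<^sup>2)) * h\<^sup>2"
proof -
  have "bern \<delta> (r i + a i * h)
      \<le> bern \<delta> (r i) + deriv (bern \<delta>) (r i) * a i * h + 3 / (8 * \<delta>) * (a i)\<^sup>2 * h\<^sup>2" for i
    using bern_descent[OF assms, of "r i" "a i * h"] by (simp add: power_mult_distrib mult.assoc)
  then have "(\<Sum>i<n. bern \<delta> (r i + a i * h))
      \<le> (\<Sum>i<n. bern \<delta> (r i) + deriv (bern \<delta>) (r i) * a i * h + 3 / (8 * \<delta>) * (a i)\<^sup>2 * h\<^sup>2)"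
    by (rule sum_mono)
  also have "\<dots> = (\<Sum>i<n. bern \<delta> (r i)) + (\<Sum>i<n. deriv (bern \<delta>) (r i) * a i * h)
      + 3 / (8 * \<delta>) * (\<Sum>i<n. (a i)\<^sup>2) * h\<^sup>2"
    by (simp add: sum.distrib sum_distrib_left sum_distrib_right)
  finally have "(1 / real n) * (\<Sum>i<n. bern \<delta> (r i + a i * h))
      \<le> (1 / real n) * ((\<Sum>i<n. bern \<delta> (r i)) + (\<Sum>i<n. deriv (bern \<delta>) (r i) * a i * h)
        + 3 / (8 * \<delta>) * (\<Sum>i<n. (a i)\<^sup>2) * h\<^sup>2)"
    by (rule mult_left_mono) simp
  then show ?thesis
    by (simp add: distrib_left mult.left_commute mult.commute)
qed

theorem proposition4:
  fixes \<delta> :: real and n p j :: nat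
    and x :: "nat \<Rightarrow> nat \<Rightarrow> real" and y :: "nat \<Rightarrow> real"
    and \<beta>0t :: real and \<beta>t :: "nat \<Rightarrow> real"
    and P :: "real \<Rightarrow> real" and b :: real
  assumes "\<delta> > 0"
    and "j < p"
    and "\<And>i. i < n \<Longrightarrow> y i \<in> {-1, 1}"
    and "\<And>k. k < p \<Longrightarrow> (1 / real n) * (\<Sum>i<n. x i k) = 0"
    and "\<And>k. k < p \<Longrightarrow> (1 / real n) * (\<Sum>i<n. (x i k)\<^sup>2) = 1"
  defines "L \<equiv> 3 / (4 * \<delta>)"
    and "\<epsilon> \<equiv> (10::real) powi (-6)"
  defines "Lt \<equiv> (1 + \<epsilon>) * L"
    and "r \<equiv> (\<lambda>i. y i * (\<beta>0t + (\<Sum>k<p. x i k * \<beta>t k)))"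
  defines "F \<equiv> (\<lambda>bj. (1 / real n) * (\<Sum>i<n. bern \<delta> (r i + y i * x i j * (bj - \<beta>t j))) + P bj)"
    and "Q \<equiv> (\<lambda>bj. (1 / real n) * (\<Sum>i<n. bern \<delta> (r i))
              + (1 / real n) * (\<Sum>i<n. deriv (bern \<delta>) (r i) * y i * x i j * (bj - \<beta>t j))
              + Lt / 2 * (bj - \<beta>t j)\<^sup>2 + P bj)"
  shows "(b = \<beta>t j \<longrightarrow> F b = Q b) \<and> (b \<noteq> \<beta>t j \<longrightarrow> F b < Q b)"
proof -
  have "(y i * x i j)\<^sup>2 = (x i j)\<^sup>2" if "i < n" for i
    using assms(3)[OF that] by (auto simp: power_mult_distrib)
  then have mean_square: "(1 / real n) * (\<Sum>i<n. (y i * x i j)\<^sup>2) = 1"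
    using assms(5)[OF \<open>j < p\<close>] by simp
  have "0 < L" and "0 < \<epsilon>"
    using \<open>\<delta> > 0\<close> by (simp_all add: L_def \<epsilon>_def)
  then have "L < Lt"
    by (simp add: Lt_def algebra_simps)
  have "F b \<le> Q b - (Lt - L) / 2 * (b - \<beta>t j)\<^sup>2"
    using mean_bern_descent[OF \<open>\<delta> > 0\<close>, of n r "\<lambda>i. y i * x i j" "b - \<beta>t j"]
    unfolding F_def Q_def mean_square L_def by (simp add: mult.assoc field_simps)
  moreover have "b \<noteq> \<beta>t j \<Longrightarrow> 0 < (Lt - L) / 2 * (b - \<beta>t j)\<^sup>2"
    using \<open>L < Lt\<close> by simp
  moreover have "F (\<beta>t j) = Q (\<beta>t j)"
    by (simp add: F_def Q_def)
  ultimately show ?thesis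
    by auto
qed

end
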